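(* Let $(F,\phi)$ be an extended representation graph for $E$ and $w\in F^0$ with $\phi(w)=v$. Then: (i) if $w$ is a source or receives an edge lying over a nonspecial real edge, $\phi$ induces a bijection $F^{\ge0}_w\to X_v$; (ii) if $w$ receives an edge lying over a special real edge $e$, $\phi$ induces a bijection from $F^{\ge0}_w$ onto the set of $x\in X_v$ that either have length $0$ or whose first edge is not $e^*$; (iii) if $w$ receives an edge lying over a ghost edge, $\phi$ induces a bijection from $F^{\ge0}_w$ onto the set of $x\in X_v$ that either have length $0$ or whose first edge is a ghost edge. In particular, $\phi$ maps every path in $F$ to a basis path.
   Context: $E=(E^0,E^1,s,r)$ is a row-finite directed graph; a vertex is regular if it emits an edge; for each regular $v$ a fixed edge $e^v\in s^{-1}(v)$ is called special, all other edges nonspecial. Paths of length $n\ge1$ are words $y_1\dots y_n$ of edges with $r(y_i)=s(y_{i+1})$; paths of length $0$ are vertices. For a graph $F$ and $w\in F^0$, $F^{\ge0}_w$ is the set of all paths in $F$ (of any length $\ge0$) with source $w$; a graph homomorphism maps paths to paths letterwise. The double graph $E_d$ has vertices $E^0$ and edges $e$ (real) and $e^*$ (ghost) for $e\in E^1$, with $s_d(e)=s(e),r_d(e)=r(e),s_d(e^* )=r(e),r_d(e^* )=s(e)$. For $p=e_1\dots e_n$ set $p^*=e_n^*\dots e_1^*$. The set $X$ of basis paths consists of the paths in $E_d$: vertices; $p,p^*$ for paths $p$ of length $\ge1$ in $E$; $pq^*$ with $p=e_1\dots e_k,q=f_1\dots f_n$ of length $\ge1$ in $E$, $r(p)=r(q)$,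 and $e_k\ne f_n$ or $e_k=f_n$ nonspecial. $X_v=\{x\in X: s_d(x)=v\}$. An extended representation graph for $E$ is a pair $(F,\phi)$, $F$ a directed graph, $\phi:F\to E_d$ a graph homomorphism, such that for every $w\in F^0$: (i) $w$ is a source or receives exactly one edge $f_w$; (ii) if $w$ is a source or $\phi(f_w)$ is a nonspecial real edge, $\phi$ maps $s^{-1}(w)$ bijectively onto $s_d^{-1}(\phi(w))$; (iii) if $\phi(f_w)$ is a special real edge, $\phi$ maps $s^{-1}(w)$ bijectively onto $s_d^{-1}(\phi(w))\setminus\{\phi(f_w)^*\}$; (iv) if $\phi(f_w)$ is a ghost edge, $\phi$ maps $s^{-1}(w)$ bijectively onto the ghost edges in $s_d^{-1}(\phi(w))$. A vertex or edge of $F$ lies over its image under $\phi$. *)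

theory Defs
  imports "Graph_Theory.Digraph" "Graph_Theory.Arc_Walk"
begin

datatype 'e dedge = Re 'e | Gh 'e

fun is_ghost :: "'e dedge \<Rightarrow> bool" where
  "is_ghost (Re e) = False" | "is_ghost (Gh e) = True"

definition row_finite :: "('v,'e) pre_digraph \<Rightarrow> bool" where
  "row_finite E \<equiv> (\<forall>v \<in> verts E. finite (out_arcs E v))"

definition regular :: "('v,'e) pre_digraph \<Rightarrow> 'v \<Rightarrow> bool" where
  "regular E v \<equiv> out_arcs E v \<noteq> {}"

definition special_choice :: "('v,'e) pre_digraph \<Rightarrow> ('v \<Rightarrow> 'e) \<Rightarrow> bool" where
  "special_choice E sp \<equiv> (\<forall>v \<in> verts E. regular E v \<longrightarrow> sp v \<in> out_arcs E v)"

definition special :: "('v,'e) pre_digraph \<Rightarrow> ('v \<Rightarrow> 'e) \<Rightarrow> 'e \<Rightarrow> bool" where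
  "special E sp e \<equiv> e = sp (tail E e)"

definition double :: "('v,'e) pre_digraph \<Rightarrow> ('v, 'e dedge) pre_digraph" where
  "double E = \<lparr> verts = verts E,
     arcs = Re ` arcs E \<union> Gh ` arcs E,
     tail = (\<lambda>x. case x of Re e \<Rightarrow> tail E e | Gh e \<Rightarrow> head E e),
     head = (\<lambda>x. case x of Re e \<Rightarrow> head E e | Gh e \<Rightarrow> tail E e) \<rparr>"

text \<open>Paths of any length \<open>\<ge> 0\<close> are represented as pairs (source vertex, list of edges);
  a path of length 0 is (v, []).  The set of paths of G with source w:\<close>
definition paths_from :: "('a,'b) pre_digraph \<Rightarrow> 'a \<Rightarrow> ('a \<times> 'b list) set" where
  "paths_from G w = {(w, p) | p v. pre_digraph.awalk G w p v}"

definition path_map :: "('a \<Rightarrow> 'v) \<Rightarrow> ('b \<Rightarrow> 'c) \<Rightarrow> ('a \<times> 'b list) \<Rightarrow> ('v \<times> 'c list)" where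
  "path_map phiV phiE x = (phiV (fst x), map phiE (snd x))"

definition basis_paths :: "('v,'e) pre_digraph \<Rightarrow> ('v \<Rightarrow> 'e) \<Rightarrow> ('v \<times> 'e dedge list) set" where
  "basis_paths E sp =
     {(v, []) | v. v \<in> verts E}
   \<union> {(u, map Re p) | u p v. pre_digraph.awalk E u p v \<and> p \<noteq> []}
   \<union> {(v, map Gh (rev p)) | u p v. pre_digraph.awalk E u p v \<and> p \<noteq> []}
   \<union> {(u, map Re p @ map Gh (rev q)) | u p q v u'.
        pre_digraph.awalk E u p v \<and> pre_digraph.awalk E u' q v \<and> p \<noteq> [] \<and> q \<noteq> [] \<and>
        (last p \<noteq> last q \<or> \<not> special E sp (last p))}"

definition basis_paths_from :: "('v,'e) pre_digraph \<Rightarrow> ('v \<Rightarrow> 'e) \<Rightarrow> 'v \<Rightarrow> ('v \<times> 'e dedge list) set" where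
  "basis_paths_from E sp v = {x \<in> basis_paths E sp. fst x = v}"

definition graph_hom :: "('a,'b) pre_digraph \<Rightarrow> ('v,'c) pre_digraph \<Rightarrow> ('a \<Rightarrow> 'v) \<Rightarrow> ('b \<Rightarrow> 'c) \<Rightarrow> bool" where
  "graph_hom F G phiV phiE \<equiv>
     (\<forall>w \<in> verts F. phiV w \<in> verts G) \<and>
     (\<forall>f \<in> arcs F. phiE f \<in> arcs G \<and> tail G (phiE f) = phiV (tail F f) \<and> head G (phiE f) = phiV (head F f))"

definition ext_rep_graph :: "('v,'e) pre_digraph \<Rightarrow> ('v \<Rightarrow> 'e) \<Rightarrow> ('a,'b) pre_digraph
     \<Rightarrow> ('a \<Rightarrow> 'v) \<Rightarrow> ('b \<Rightarrow> 'e dedge) \<Rightarrow> bool" where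
  "ext_rep_graph E sp F phiV phiE \<equiv>
     wf_digraph F \<and> graph_hom F (double E) phiV phiE \<and>
     (\<forall>w \<in> verts F.
        (in_arcs F w = {} \<or> (\<exists>f. in_arcs F w = {f})) \<and>
        (in_arcs F w = {} \<longrightarrow> bij_betw phiE (out_arcs F w) (out_arcs (double E) (phiV w))) \<and>
        (\<forall>f \<in> in_arcs F w.
           (\<forall>e. phiE f = Re e \<and> \<not> special E sp e \<longrightarrow>
                 bij_betw phiE (out_arcs F w) (out_arcs (double E) (phiV w))) \<and>
           (\<forall>e. phiE f = Re e \<and> special E sp e \<longrightarrow>
                 bij_betw phiE (out_arcs F w) (out_arcs (double E) (phiV w) - {Gh e})) \<and>
           (\<forall>e. phiE f = Gh e \<longrightarrow>
                 bij_betw phiE (out_arcs F w) {g \<in> out_arcs (double E) (phiV w). is_ghost g})))"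

end

theory Submission
  imports Defs
begin

(* A word in the edges of E_d is a basis path exactly when no real edge follows a ghost edge and
   no e^* follows a special edge e, i.e. when each letter is admissible after its predecessor.
   The axioms of an extended representation graph say that phi maps the out-edges of w
   bijectively onto the out-edges of phi(w) admissible after the label of the edge entering w.
   Lifting edge by edge, phi maps the paths from w bijectively onto the admissible walks from
   phi(w) whose first letter is admissible after that label; the three cases of the lemma are the
   three kinds of labels. *)

fun admissible_word :: "('c option \<Rightarrow> 'c \<Rightarrow> bool) \<Rightarrow> 'c option \<Rightarrow> 'c list \<Rightarrow> bool" where
  "admissible_word adm pr [] = True"
| "admissible_word adm pr (x # xs) = (adm pr x \<and> admissible_word adm (Some x) xs)"

lemma admissible_word_append:
  "admissible_word adm pr (xs @ ys) \<longleftrightarrow>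
     admissible_word adm pr xs \<and> admissible_word adm (if xs = [] then pr else Some (last xs)) ys"
  by (induction xs arbitrary: pr) auto

lemma admissible_word_iff_None:
  assumes "\<And>x. adm None x"
  shows "admissible_word adm pr xs \<longleftrightarrow> admissible_word adm None xs \<and> (xs = [] \<or> adm pr (hd xs))"
  using assms by (cases xs) auto

lemma (in wf_digraph) awalk_append_ex_iff:
  "awalk u (p @ q) v \<longleftrightarrow> (\<exists>m. awalk u p m \<and> awalk m q v)"
  by (auto intro: awalk_appendI)

locale admissible_cover =
  F: wf_digraph F + G: wf_digraph G
  for F :: "('a,'b) pre_digraph" and G :: "('v,'c) pre_digraph"
    and phiV :: "'a \<Rightarrow> 'v" and phiE :: "'b \<Rightarrow> 'c"
    and adm :: "'c option \<Rightarrow> 'c \<Rightarrow> bool" and prev :: "'a \<Rightarrow> 'c option" +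
  assumes hom: "graph_hom F G phiV phiE"
    and out_arcs_bij:
      "w \<in> verts F \<Longrightarrow> bij_betw phiE (out_arcs F w) {x \<in> out_arcs G (phiV w). adm (prev w) x}"
    and prev_head: "f \<in> arcs F \<Longrightarrow> prev (head F f) = Some (phiE f)"
begin

lemma awalk_image:
  "F.awalk w p v \<Longrightarrow> G.awalk (phiV w) (map phiE p) (phiV v) \<and> admissible_word adm (prev w) (map phiE p)"
proof (induction p arbitrary: w)
  case Nil
  then show ?case using hom by (auto simp: F.awalk_Nil_iff G.awalk_Nil_iff graph_hom_def)
next
  case (Cons f p)
  then have w: "w \<in> verts F" and f: "f \<in> out_arcs F w" and p: "F.awalk (head F f) p v"
    by (auto simp: F.awalk_Cons_iff)
  have "phiE f \<in> phiE ` out_arcs F w" using f by (rule imageI)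
  also have "\<dots> = {x \<in> out_arcs G (phiV w). adm (prev w) x}"
    by (rule bij_betw_imp_surj_on[OF out_arcs_bij[OF w]])
  finally have "phiE f \<in> out_arcs G (phiV w)" "adm (prev w) (phiE f)" by auto
  moreover have "head G (phiE f) = phiV (head F f)" using hom f by (auto simp: graph_hom_def)
  ultimately show ?case using Cons.IH[OF p] prev_head f by (auto simp: G.awalk_Cons_iff)
qed

lemma awalk_map_inj:
  "F.awalk w p a \<Longrightarrow> F.awalk w q b \<Longrightarrow> map phiE p = map phiE q \<Longrightarrow> p = q"
proof (induction p arbitrary: w q)
  case (Cons f p)
  then obtain g q' where q: "q = g # q'" by (cases q) auto
  with Cons.prems have "f \<in> out_arcs F w" "g \<in> out_arcs F w" "phiE f = phiE g"
    by (auto simp: F.awalk_Cons_iff)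
  then have "f = g"
    using out_arcs_bij[of w] F.tail_in_verts by (auto simp: bij_betw_def inj_on_def)
  then show ?case using Cons q by (auto simp: F.awalk_Cons_iff)
qed simp

lemma awalk_lift:
  "G.awalk (phiV w) xs v' \<Longrightarrow> admissible_word adm (prev w) xs \<Longrightarrow> w \<in> verts F \<Longrightarrow>
     \<exists>p v. F.awalk w p v \<and> map phiE p = xs"
proof (induction xs arbitrary: w)
  case Nil
  then show ?case by (auto simp: F.awalk_Nil_iff)
next
  case (Cons x xs)
  then have "x \<in> phiE ` out_arcs F w" "G.awalk (head G x) xs v'" "admissible_word adm (Some x) xs"
    using out_arcs_bij[of w] by (auto simp: G.awalk_Cons_iff bij_betw_def)
  then obtain f where f: "f \<in> out_arcs F w" "phiE f = x" "G.awalk (phiV (head F f)) xs v'"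
    and "admissible_word adm (prev (head F f)) xs"
    using hom prev_head by (auto simp: graph_hom_def)
  then obtain p v where "F.awalk (head F f) p v" "map phiE p = xs"
    using Cons.IH[of "head F f"] F.head_in_verts[of f] f by auto
  then show ?case using f by (intro exI[of _ "f # p"] exI[of _ v]) (auto simp: F.awalk_Cons_iff)
qed

lemma paths_from_bij:
  assumes "w \<in> verts F"
  shows "bij_betw (path_map phiV phiE) (paths_from F w)
     {(phiV w, xs) | xs. (\<exists>v. G.awalk (phiV w) xs v) \<and> admissible_word adm (prev w) xs}"
    (is "bij_betw _ _ ?A")
proof (rule bij_betw_imageI)
  show "inj_on (path_map phiV phiE) (paths_from F w)"
  proof (rule inj_onI)
    fix x y assume "x \<in> paths_from F w" "y \<in> paths_from F w" "path_map phiV phiE x = path_map phiV phiE y"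
    then obtain p a q b where "x = (w, p)" "y = (w, q)" "F.awalk w p a" "F.awalk w q b"
        "map phiE p = map phiE q"
      unfolding paths_from_def path_map_def by auto
    then show "x = y" using awalk_map_inj by blast
  qed
  show "path_map phiV phiE ` paths_from F w = ?A"
  proof (intro equalityI subsetI)
    fix y assume "y \<in> path_map phiV phiE ` paths_from F w"
    then obtain p u where "y = (phiV w, map phiE p)" "F.awalk w p u"
      unfolding paths_from_def path_map_def by auto
    then show "y \<in> ?A"
      using awalk_image by blast
  next
    fix y assume "y \<in> ?A"
    then obtain xs v where y: "y = (phiV w, xs)" "G.awalk (phiV w) xs v" "admissible_word adm (prev w) xs"
      by blast
    obtain p u where p: "F.awalk w p u" "map phiE p = xs"
      using awalk_lift[OF y(2,3) assms] by blast
    have "(w, p) \<in> paths_from F w" using p(1) unfolding paths_from_def by blast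
    moreover have "y = path_map phiV phiE (w, p)" using p(2) y(1) by (simp add: path_map_def)
    ultimately show "y \<in> path_map phiV phiE ` paths_from F w" by (rule rev_image_eqI)
  qed
qed

end

fun admissible_step :: "('v,'e) pre_digraph \<Rightarrow> ('v \<Rightarrow> 'e) \<Rightarrow> 'e dedge option \<Rightarrow> 'e dedge \<Rightarrow> bool" where
  "admissible_step E sp None x = True"
| "admissible_step E sp (Some (Re e)) x = (special E sp e \<longrightarrow> x \<noteq> Gh e)"
| "admissible_step E sp (Some (Gh e)) x = is_ghost x"

lemma admissible_word_map_Re:
  "admissible_word (admissible_step E sp) pr (map Re p) \<longleftrightarrow>
     p = [] \<or> admissible_step E sp pr (Re (hd p))"
  by (induction p arbitrary: pr) (auto simp: neq_Nil_conv)

lemma admissible_word_map_Gh: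
  "admissible_word (admissible_step E sp) pr (map Gh p) \<longleftrightarrow>
     p = [] \<or> admissible_step E sp pr (Gh (hd p))"
  by (induction p arbitrary: pr) (auto simp: neq_Nil_conv)

lemma admissible_word_real_then_ghost:
  "admissible_word (admissible_step E sp) pr xs \<Longrightarrow> \<exists>p r. xs = map Re p @ map Gh r"
proof (induction xs arbitrary: pr)
  case (Cons x xs)
  then obtain p r where xs: "xs = map Re p @ map Gh r" by fastforce
  show ?case
  proof (cases x)
    case (Re e)
    with xs show ?thesis by (intro exI[of _ "e # p"] exI[of _ r]) simp
  next
    case (Gh e)
    with Cons.prems xs have "p = []" by (cases p) auto
    with xs Gh show ?thesis by (intro exI[of _ "[]"] exI[of _ "e # r"]) simp
  qed
qed simp

lemma wf_digraph_double: "wf_digraph E \<Longrightarrow> wf_digraph (double E)"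
  unfolding wf_digraph_def double_def by (auto split: dedge.splits)

lemma double_simps [simp]:
  "verts (double E) = verts E"
  "Re e \<in> arcs (double E) \<longleftrightarrow> e \<in> arcs E"
  "Gh e \<in> arcs (double E) \<longleftrightarrow> e \<in> arcs E"
  "tail (double E) (Re e) = tail E e"
  "head (double E) (Re e) = head E e"
  "tail (double E) (Gh e) = head E e"
  "head (double E) (Gh e) = tail E e"
  by (auto simp: double_def)

context wf_digraph
begin

interpretation D: wf_digraph "double G"
  by (rule wf_digraph_double) unfold_locales

lemma awalk_double_Re: "D.awalk u (map Re p) v \<longleftrightarrow> awalk u p v"
  by (induction p arbitrary: u) (auto simp: awalk_Nil_iff D.awalk_Nil_iff awalk_Cons_iff D.awalk_Cons_iff)

lemma awalk_double_Gh: "D.awalk u (map Gh p) v \<longleftrightarrow> awalk v (rev p) u"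
proof (induction p arbitrary: u)
  case Nil
  then show ?case by (auto simp: awalk_Nil_iff D.awalk_Nil_iff)
next
  case (Cons a p)
  have "awalk v (rev (a # p)) u \<longleftrightarrow> awalk v (rev p) (tail G a) \<and> a \<in> arcs G \<and> u = head G a"
    by (auto simp: awalk_append_ex_iff awalk_Cons_iff awalk_Nil_iff)
  then show ?case using Cons.IH by (auto simp: D.awalk_Cons_iff)
qed

lemma basis_paths_subset_admissible_walks:
  "basis_paths G sp \<subseteq>
     {(u, xs) | u xs. (\<exists>v. D.awalk u xs v) \<and> admissible_word (admissible_step G sp) None xs}"
  unfolding basis_paths_def
  by (auto simp: D.awalk_Nil_iff awalk_double_Re awalk_double_Gh D.awalk_append_ex_iff
      admissible_word_append admissible_word_map_Re admissible_word_map_Gh last_map hd_rev)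

lemma admissible_walk_in_basis_paths:
  assumes walk: "D.awalk u xs v" and adm: "admissible_word (admissible_step G sp) None xs"
  shows "(u, xs) \<in> basis_paths G sp"
proof -
  obtain p r where xs: "xs = map Re p @ map Gh r"
    using admissible_word_real_then_ghost[OF adm] by blast
  then obtain m where p: "awalk u p m" and r: "awalk v (rev r) m"
    using walk by (auto simp: D.awalk_append_ex_iff awalk_double_Re awalk_double_Gh)
  have turn: "last p \<noteq> last (rev r) \<or> \<not> special G sp (last p)" if "p \<noteq> []" "r \<noteq> []"
    using adm that by (auto simp: xs admissible_word_append admissible_word_map_Gh last_map last_rev)
  consider "p = []" "r = []" | "p \<noteq> []" "r = []" | "p = []" "r \<noteq> []" | "p \<noteq> []" "r \<noteq> []"
    by blast
  then show ?thesis
  proof cases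
    case 1
    then show ?thesis using p by (auto simp: basis_paths_def xs awalk_Nil_iff)
  next
    case 2
    then show ?thesis using p unfolding basis_paths_def xs by auto
  next
    case 3
    then have "(m, map Gh (rev (rev r))) \<in> basis_paths G sp"
      using r unfolding basis_paths_def by blast
    then show ?thesis using 3 p by (simp add: xs awalk_Nil_iff)
  next
    case 4
    then have "(u, map Re p @ map Gh (rev (rev r))) \<in> basis_paths G sp"
      using p r turn unfolding basis_paths_def by blast
    then show ?thesis by (simp add: xs)
  qed
qed

lemma basis_paths_eq_admissible_walks:
  "basis_paths G sp =
     {(u, xs) | u xs. (\<exists>v. D.awalk u xs v) \<and> admissible_word (admissible_step G sp) None xs}"
  using basis_paths_subset_admissible_walks admissible_walk_in_basis_paths by blast

end

definition in_label :: "('a,'b) pre_digraph \<Rightarrow> ('b \<Rightarrow> 'e dedge) \<Rightarrow> 'a \<Rightarrow> 'e dedge option" where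
  "in_label F phiE w = (if in_arcs F w = {} then None else Some (phiE (the_elem (in_arcs F w))))"

lemma ext_rep_graph_in_label:
  assumes "ext_rep_graph E sp F phiV phiE" "w \<in> verts F" "f \<in> in_arcs F w"
  shows "in_label F phiE w = Some (phiE f)"
proof -
  have "in_arcs F w = {} \<or> (\<exists>f. in_arcs F w = {f})"
    using assms(1,2) unfolding ext_rep_graph_def by blast
  then have "in_arcs F w = {f}" using assms(3) by (metis empty_iff singletonD)
  then show ?thesis by (simp add: in_label_def)
qed

lemma ext_rep_graph_out_arcs_bij:
  assumes rep: "ext_rep_graph E sp F phiV phiE" and w: "w \<in> verts F"
  shows "bij_betw phiE (out_arcs F w)
           {x \<in> out_arcs (double E) (phiV w). admissible_step E sp (in_label F phiE w) x}"
proof (cases "in_arcs F w = {}")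
  case True
  then have "bij_betw phiE (out_arcs F w) (out_arcs (double E) (phiV w))"
    using rep w by (simp add: ext_rep_graph_def)
  then show ?thesis using True by (simp add: in_label_def out_arcs_def)
next
  case False
  then obtain f where f: "f \<in> in_arcs F w" by blast
  let ?S = "out_arcs (double E) (phiV w)"
  have "{x \<in> ?S. admissible_step E sp (Some (phiE f)) x} =
          (case phiE f of Re e \<Rightarrow> if special E sp e then ?S - {Gh e} else ?S | Gh e \<Rightarrow> {x \<in> ?S. is_ghost x})"
    by (cases "phiE f") auto
  then show ?thesis
    using rep w f ext_rep_graph_in_label[OF rep w f]
    by (cases "phiE f") (auto simp: ext_rep_graph_def)
qed

lemma ext_rep_graph_admissible_cover:
  assumes E: "wf_digraph E" and rep: "ext_rep_graph E sp F phiV phiE"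
  shows "admissible_cover F (double E) phiV phiE (admissible_step E sp) (in_label F phiE)"
proof -
  have F: "wf_digraph F" and hom: "graph_hom F (double E) phiV phiE"
    using rep by (simp_all add: ext_rep_graph_def)
  have "in_label F phiE (head F f) = Some (phiE f)" if "f \<in> arcs F" for f
    using ext_rep_graph_in_label[OF rep] wf_digraph.head_in_verts[OF F] that by simp
  then show ?thesis
    using ext_rep_graph_out_arcs_bij[OF rep]
    by (intro admissible_cover.intro[OF F wf_digraph_double[OF E]] admissible_cover_axioms.intro hom)
qed

lemma ext_rep_graph_paths_from_bij:
  assumes E: "wf_digraph E" and rep: "ext_rep_graph E sp F phiV phiE" and w: "w \<in> verts F"
  shows "bij_betw (path_map phiV phiE) (paths_from F w)
           {x \<in> basis_paths_from E sp (phiV w).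
              snd x = [] \<or> admissible_step E sp (in_label F phiE w) (hd (snd x))}"
proof -
  interpret admissible_cover F "double E" phiV phiE "admissible_step E sp" "in_label F phiE"
    using E rep by (rule ext_rep_graph_admissible_cover)
  have "{(phiV w, xs) | xs. (\<exists>v. G.awalk (phiV w) xs v) \<and>
            admissible_word (admissible_step E sp) (in_label F phiE w) xs} =
        {x \<in> basis_paths_from E sp (phiV w).
            snd x = [] \<or> admissible_step E sp (in_label F phiE w) (hd (snd x))}"
    unfolding basis_paths_from_def wf_digraph.basis_paths_eq_admissible_walks[OF E]
    by (subst admissible_word_iff_None) auto
  then show ?thesis using paths_from_bij[OF w] by simp
qed

theorem lemma5p1:
  fixes E :: "('v,'e) pre_digraph" and sp :: "'v \<Rightarrow> 'e"
    and F :: "('a,'b) pre_digraph" and phiV :: "'a \<Rightarrow> 'v" and phiE :: "'b \<Rightarrow> 'e dedge"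
  assumes "wf_digraph E" and "row_finite E" and "special_choice E sp"
    and "ext_rep_graph E sp F phiV phiE"
    and "w \<in> verts F" and "phiV w = v"
  shows "((in_arcs F w = {} \<or> (\<exists>f \<in> in_arcs F w. \<exists>e. phiE f = Re e \<and> \<not> special E sp e)) \<longrightarrow>
           bij_betw (path_map phiV phiE) (paths_from F w) (basis_paths_from E sp v)) \<and>
         (\<forall>f \<in> in_arcs F w. \<forall>e. phiE f = Re e \<and> special E sp e \<longrightarrow>
           bij_betw (path_map phiV phiE) (paths_from F w)
             {x \<in> basis_paths_from E sp v. snd x = [] \<or> hd (snd x) \<noteq> Gh e}) \<and>
         (\<forall>f \<in> in_arcs F w. \<forall>e. phiE f = Gh e \<longrightarrow>
           bij_betw (path_map phiV phiE) (paths_from F w)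
             {x \<in> basis_paths_from E sp v. snd x = [] \<or> is_ghost (hd (snd x))}) \<and>
         (\<forall>u \<in> verts F. \<forall>x \<in> paths_from F u. path_map phiV phiE x \<in> basis_paths E sp)"
proof -
  note E = assms(1) and rep = assms(4)
  let ?adm = "admissible_step E sp (in_label F phiE w)"
  have bij: "bij_betw (path_map phiV phiE) (paths_from F w)
               {x \<in> basis_paths_from E sp v. snd x = [] \<or> ?adm (hd (snd x))}"
    using ext_rep_graph_paths_from_bij[OF E rep assms(5)] assms(6) by simp
  note label = ext_rep_graph_in_label[OF rep assms(5)]
  have "?adm = (\<lambda>x. True)" if "in_arcs F w = {}"
    using that by (simp add: in_label_def fun_eq_iff)
  moreover have "?adm = (\<lambda>x. True)" if "f \<in> in_arcs F w" "phiE f = Re e" "\<not> special E sp e" for f e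
    using that label by auto
  moreover have "?adm = (\<lambda>x. x \<noteq> Gh e)" if "f \<in> in_arcs F w" "phiE f = Re e" "special E sp e" for f e
    using that label by auto
  moreover have "?adm = is_ghost" if "f \<in> in_arcs F w" "phiE f = Gh e" for f e
    using that label by auto
  moreover have "path_map phiV phiE x \<in> basis_paths E sp" if "u \<in> verts F" "x \<in> paths_from F u" for u x
    using bij_betw_imp_surj_on[OF ext_rep_graph_paths_from_bij[OF E rep that(1)]] that(2)
    by (auto simp: basis_paths_from_def)
  ultimately show ?thesis using bij by auto
qed

end
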